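(* Let $H\in(1/2,1)$, $T>0$, and let $S^H$ be a sub-fractional Brownian motion with index $H$. Then for every $\delta\in(0,T/2]$, $$\sup_{\delta\le s\le T-\delta}\sup_{0<h\le\delta}\Big|\frac{\sigma^2_{S^H}(s,s+h)}{h^{2H}}-1\Big|\ge H(2H-1)(2^{2H-1}-1)\,3^{2H-2}>0.$$
   Context: A sub-fractional Brownian motion with index $H\in(0,1)$ is a mean zero Gaussian process $(S^H_t)_{t\ge0}$ with covariance $G_H(s,t)=s^{2H}+t^{2H}-\tfrac12[(s+t)^{2H}+|s-t|^{2H}]$; its incremental variance is $\sigma^2_{S^H}(s,t)=\mathbb{E}|S^H_t-S^H_s|^2=|t-s|^{2H}+(s+t)^{2H}-2^{2H-1}(t^{2H}+s^{2H})$. *)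

theory Defs
  imports Complex_Main
begin

text \<open>Incremental variance of a sub-fractional Brownian motion with index H:
  sigma^2(s,t) = E|S_t - S_s|^2 = |t-s|^(2H) + (s+t)^(2H) - 2^(2H-1) (t^(2H) + s^(2H)).\<close>
definition sfbm_incr_var :: "real \<Rightarrow> real \<Rightarrow> real \<Rightarrow> real" where
  "sfbm_incr_var H s t = \<bar>t - s\<bar> powr (2*H) + (s + t) powr (2*H)
      - 2 powr (2*H - 1) * (t powr (2*H) + s powr (2*H))"

end

theory Submission
  imports Defs "HOL-Analysis.Convex"
begin

(* Write p = 2H. Then sigma^2(s, s+h) = h^p - 2^(p-1) D, where
   D = (s+h)^p + s^p - 2 (s+h/2)^p is the symmetric second difference of x^p around s + h/2,
   so D lies between p(p-1) (s+h)^(p-2) (h/2)^2 and p(p-1) s^(p-2) (h/2)^2.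
   The upper bound keeps the relative error bounded for h <= s, so both suprema are finite;
   the lower bound at s = h = delta gives the value H(2H-1) 4^(2H-2), which dominates the
   stated constant since 2^q - 1 <= q <= (4/3)^(q-1) for q = 2H-1 in (0,1). *)

lemma symmetric_difference_lower_bound:
  fixes f f' :: "real \<Rightarrow> real"
  assumes "0 \<le> d"
    and deriv: "\<And>x. x \<in> {m-d..m+d} \<Longrightarrow> (f has_real_derivative f' x) (at x)"
    and bound: "\<And>x. x \<in> {m-d..m+d} \<Longrightarrow> L \<le> f' x"
  shows "2 * L * d \<le> f (m+d) - f (m-d)"
proof -
  let ?g = "\<lambda>u. f (m+u) - f (m-u) - 2 * L * u"
  have "?g 0 \<le> ?g d"
  proof (rule DERIV_nonneg_imp_nondecreasing[OF \<open>0 \<le> d\<close>])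
    fix u assume u: "0 \<le> u" "u \<le> d"
    then have "(?g has_real_derivative f' (m+u) + f' (m-u) - 2 * L) (at u)"
      by (auto intro!: derivative_eq_intros DERIV_chain2[OF deriv])
    moreover have "0 \<le> f' (m+u) + f' (m-u) - 2 * L"
      using bound[of "m+u"] bound[of "m-u"] u by auto
    ultimately show "\<exists>y. (?g has_real_derivative y) (at u) \<and> 0 \<le> y" by blast
  qed
  then show ?thesis by simp
qed

lemma second_symmetric_difference_lower_bound:
  fixes f f' f'' :: "real \<Rightarrow> real"
  assumes "0 \<le> d"
    and deriv: "\<And>x. x \<in> {m-d..m+d} \<Longrightarrow> (f has_real_derivative f' x) (at x)"
    and deriv2: "\<And>x. x \<in> {m-d..m+d} \<Longrightarrow> (f' has_real_derivative f'' x) (at x)"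
    and bound: "\<And>x. x \<in> {m-d..m+d} \<Longrightarrow> L \<le> f'' x"
  shows "L * d\<^sup>2 \<le> f (m+d) + f (m-d) - 2 * f m"
proof -
  let ?g = "\<lambda>u. f (m+u) + f (m-u) - 2 * f m - L * u\<^sup>2"
  have "?g 0 \<le> ?g d"
  proof (rule DERIV_nonneg_imp_nondecreasing[OF \<open>0 \<le> d\<close>])
    fix u assume u: "0 \<le> u" "u \<le> d"
    then have "(?g has_real_derivative f' (m+u) - f' (m-u) - 2 * L * u) (at u)"
      by (auto intro!: derivative_eq_intros DERIV_chain2[OF deriv])
    moreover have "2 * L * u \<le> f' (m+u) - f' (m-u)"
    proof (rule symmetric_difference_lower_bound)
      show "(f' has_real_derivative f'' x) (at x)" "L \<le> f'' x" if "x \<in> {m-u..m+u}" for x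
        using that u by (auto intro!: deriv2 bound)
    qed (use u in simp)
    ultimately show "\<exists>y. (?g has_real_derivative y) (at u) \<and> 0 \<le> y"
      by force
  qed
  then show ?thesis by simp
qed

lemma second_symmetric_difference_upper_bound:
  fixes f f' f'' :: "real \<Rightarrow> real"
  assumes "0 \<le> d"
    and "\<And>x. x \<in> {m-d..m+d} \<Longrightarrow> (f has_real_derivative f' x) (at x)"
    and "\<And>x. x \<in> {m-d..m+d} \<Longrightarrow> (f' has_real_derivative f'' x) (at x)"
    and "\<And>x. x \<in> {m-d..m+d} \<Longrightarrow> f'' x \<le> U"
  shows "f (m+d) + f (m-d) - 2 * f m \<le> U * d\<^sup>2"
proof -
  have "- U * d\<^sup>2 \<le> - f (m+d) + - f (m-d) - 2 * - f m"
    using assms by (intro second_symmetric_difference_lower_bound[of d m _ "\<lambda>x. - f' x" "\<lambda>x. - f'' x"])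
      (auto intro: DERIV_minus)
  then show ?thesis by simp
qed

lemma powr_second_symmetric_difference_bounds:
  fixes p s h :: real
  assumes "1 \<le> p" "p \<le> 2" "0 < s" "0 \<le> h"
  shows "p * (p-1) * (s+h) powr (p-2) * (h/2)\<^sup>2 \<le> (s+h) powr p + s powr p - 2 * (s+h/2) powr p"
    and "(s+h) powr p + s powr p - 2 * (s+h/2) powr p \<le> p * (p-1) * s powr (p-2) * (h/2)\<^sup>2"
proof -
  let ?m = "s + h/2" and ?d = "h/2"
  have ends: "?m + ?d = s + h" "?m - ?d = s" by simp_all
  have pos: "0 < x" if "x \<in> {?m-?d..?m+?d}" for x
    using that \<open>0 < s\<close> by auto
  have deriv: "((\<lambda>x. x powr p) has_real_derivative p * x powr (p-1)) (at x)"
    and deriv2: "((\<lambda>x. p * x powr (p-1)) has_real_derivative p * (p-1) * x powr (p-2)) (at x)"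
    if "x \<in> {?m-?d..?m+?d}" for x
    using pos[OF that] by (auto intro!: derivative_eq_intros simp: algebra_simps)
  have mono: "p * (p-1) * (s+h) powr (p-2) \<le> p * (p-1) * x powr (p-2)"
              "p * (p-1) * x powr (p-2) \<le> p * (p-1) * s powr (p-2)"
    if "x \<in> {?m-?d..?m+?d}" for x
    using that assms pos[OF that]
    by (auto intro!: mult_left_mono powr_mono2')
  show "p * (p-1) * (s+h) powr (p-2) * (h/2)\<^sup>2 \<le> (s+h) powr p + s powr p - 2 * (s+h/2) powr p"
    using second_symmetric_difference_lower_bound[of ?d ?m, OF _ deriv deriv2 mono(1)] assms
    unfolding ends by simp
  show "(s+h) powr p + s powr p - 2 * (s+h/2) powr p \<le> p * (p-1) * s powr (p-2) * (h/2)\<^sup>2"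
    using second_symmetric_difference_upper_bound[of ?d ?m, OF _ deriv deriv2 mono(2)] assms
    unfolding ends by simp
qed

lemma sfbm_incr_var_eq_second_difference:
  fixes H s h :: real
  assumes "0 \<le> s" "0 \<le> h"
  shows "sfbm_incr_var H s (s+h)
           = h powr (2*H) - 2 powr (2*H-1) * ((s+h) powr (2*H) + s powr (2*H) - 2 * (s+h/2) powr (2*H))"
proof -
  have "(s + (s+h)) powr (2*H) = 2 powr (2*H) * (s+h/2) powr (2*H)"
    using assms powr_mult[of 2 "s+h/2" "2*H"] by (simp add: algebra_simps)
  also have "\<dots> = 2 * 2 powr (2*H-1) * (s+h/2) powr (2*H)"
    by (simp add: powr_diff)
  finally show ?thesis
    unfolding sfbm_incr_var_def using assms by (simp add: algebra_simps)
qed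

lemma sfbm_relative_error_eq:
  fixes H s h :: real
  assumes "1/2 \<le> H" "H \<le> 1" "0 < s" "0 < h"
  shows "\<bar>sfbm_incr_var H s (s+h) / h powr (2*H) - 1\<bar>
           = 2 powr (2*H-1) * ((s+h) powr (2*H) + s powr (2*H) - 2 * (s+h/2) powr (2*H)) / h powr (2*H)"
proof -
  let ?D = "(s+h) powr (2*H) + s powr (2*H) - 2 * (s+h/2) powr (2*H)"
  have "0 \<le> 2*H * (2*H-1) * (s+h) powr (2*H-2) * (h/2)\<^sup>2"
    using assms by simp
  also have "\<dots> \<le> ?D"
    using assms by (intro powr_second_symmetric_difference_bounds(1)) auto
  finally have "0 \<le> 2 powr (2*H-1) * ?D / h powr (2*H)"
    by simp
  moreover have "sfbm_incr_var H s (s+h) / h powr (2*H) - 1 = - (2 powr (2*H-1) * ?D / h powr (2*H))"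
    using assms by (simp add: sfbm_incr_var_eq_second_difference diff_divide_distrib)
  ultimately show ?thesis
    by (metis abs_minus_cancel abs_of_nonneg)
qed

lemma sfbm_relative_error_le:
  fixes H s h :: real
  assumes "1/2 \<le> H" "H \<le> 1" "0 < h" "h \<le> s"
  shows "\<bar>sfbm_incr_var H s (s+h) / h powr (2*H) - 1\<bar> \<le> H * (2*H-1) * 2 powr (2*H-2)"
proof -
  let ?D = "(s+h) powr (2*H) + s powr (2*H) - 2 * (s+h/2) powr (2*H)"
  have "?D \<le> 2*H * (2*H-1) * s powr (2*H-2) * (h/2)\<^sup>2"
    using assms by (intro powr_second_symmetric_difference_bounds(2)) auto
  also have "\<dots> \<le> 2*H * (2*H-1) * h powr (2*H-2) * (h/2)\<^sup>2"
    using assms by (intro mult_right_mono mult_left_mono powr_mono2') auto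
  also have "\<dots> = H * (2*H-1) / 2 * h powr (2*H)"
    using assms by (simp add: powr_diff power2_eq_square field_simps)
  finally have "2 powr (2*H-1) * ?D / h powr (2*H) \<le> 2 powr (2*H-1) * (H * (2*H-1) / 2)"
    using assms by (simp add: divide_le_eq mult_left_mono)
  also have "\<dots> = H * (2*H-1) * 2 powr (2*H-2)"
    by (simp add: powr_diff)
  finally show ?thesis
    using assms by (simp add: sfbm_relative_error_eq)
qed

lemma sfbm_relative_error_diagonal_ge:
  fixes H \<delta> :: real
  assumes "1/2 \<le> H" "H \<le> 1" "0 < \<delta>"
  shows "H * (2*H-1) * 4 powr (2*H-2) \<le> \<bar>sfbm_incr_var H \<delta> (\<delta>+\<delta>) / \<delta> powr (2*H) - 1\<bar>"
proof -
  let ?D = "(\<delta>+\<delta>) powr (2*H) + \<delta> powr (2*H) - 2 * (\<delta>+\<delta>/2) powr (2*H)"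
  have "H * (2*H-1) * 2 powr (2*H-3) * \<delta> powr (2*H) = 2*H * (2*H-1) * (\<delta>+\<delta>) powr (2*H-2) * (\<delta>/2)\<^sup>2"
    using assms powr_mult[of 2 \<delta> "2*H-2"]
    by (simp add: powr_diff power2_eq_square field_simps flip: mult_2)
  also have "\<dots> \<le> ?D"
    using assms by (intro powr_second_symmetric_difference_bounds(1)) auto
  finally have "2 powr (2*H-1) * (H * (2*H-1) * 2 powr (2*H-3)) \<le> 2 powr (2*H-1) * ?D / \<delta> powr (2*H)"
    using assms by (simp add: le_divide_eq mult.assoc)
  moreover have "2 powr (2*H-1) * (H * (2*H-1) * 2 powr (2*H-3)) = H * (2*H-1) * 4 powr (2*H-2)"
    using powr_mult[of 2 2 "2*H-2"] by (simp add: powr_diff powr_add field_simps)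
  ultimately have "H * (2*H-1) * 4 powr (2*H-2) \<le> 2 powr (2*H-1) * ?D / \<delta> powr (2*H)"
    by simp
  then show ?thesis
    unfolding sfbm_relative_error_eq[OF assms(1-3,3)] .
qed

lemma powr_le_one_plus_mult:
  fixes x q :: real
  assumes "0 < x" "0 \<le> q" "q \<le> 1"
  shows "x powr q \<le> 1 + q * (x - 1)"
proof -
  have "x powr q = exp ((1-q) *\<^sub>R 0 + q *\<^sub>R ln x)"
    using assms by (simp add: powr_def)
  also have "\<dots> \<le> (1-q) * exp 0 + q * exp (ln x)"
    using convex_onD[OF exp_convex, of q 0 "ln x"] assms by simp
  finally show ?thesis
    using assms by (simp add: algebra_simps)
qed

lemma two_powr_minus_one_mult_three_powr_le:
  fixes q :: real
  assumes "0 \<le> q" "q \<le> 1"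
  shows "(2 powr q - 1) * 3 powr (q-1) \<le> 4 powr (q-1)"
proof -
  have "(q-1) * (1/3) \<le> (q-1) * ln (4/3)"
    using assms ln_le_minus_one[of "4/3"] by (intro mult_left_mono_neg) auto
  also have "\<dots> \<le> exp ((q-1) * ln (4/3)) - 1"
    using exp_ge_add_one_self[of "(q-1) * ln (4/3)"] by linarith
  finally have "2 powr q - 1 \<le> (4/3) powr (q-1)"
    using powr_le_one_plus_mult[of 2 q] assms by (simp add: powr_def)
  then have "(2 powr q - 1) * 3 powr (q-1) \<le> (4/3) powr (q-1) * 3 powr (q-1)"
    by (rule mult_right_mono) simp
  also have "\<dots> = 4 powr (q-1)"
    using powr_mult[of "4/3" 3 "q-1"] by simp
  finally show ?thesis .
qed

theorem mainTheorem11: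
  fixes H T \<delta> :: real
  assumes "1/2 < H" "H < 1" "T > 0" "0 < \<delta>" "\<delta> \<le> T/2"
  shows "(SUP s\<in>{\<delta>..T-\<delta>}. SUP h\<in>{0<..\<delta>}.
            \<bar>sfbm_incr_var H s (s+h) / h powr (2*H) - 1\<bar>)
           \<ge> H*(2*H-1)*(2 powr (2*H-1) - 1) * 3 powr (2*H-2)
         \<and> H*(2*H-1)*(2 powr (2*H-1) - 1) * 3 powr (2*H-2) > 0"
proof -
  define c where "c = H*(2*H-1)*(2 powr (2*H-1) - 1) * 3 powr (2*H-2)"
  define err where "err s h = \<bar>sfbm_incr_var H s (s+h) / h powr (2*H) - 1\<bar>" for s h
  have H: "1/2 \<le> H" "H \<le> 1" "0 < 2*H-1"
    using assms by auto
  define B where "B = H * (2*H-1) * 2 powr (2*H-2)"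
  have err_le: "err s h \<le> B" if "\<delta> \<le> s" "h \<in> {0<..\<delta>}" for s h
    unfolding err_def B_def using that H by (intro sfbm_relative_error_le) auto
  have bdd: "bdd_above (err s ` {0<..\<delta>})" if "\<delta> \<le> s" for s
    using err_le that by (intro bdd_aboveI2)
  have bdd_sup: "bdd_above ((\<lambda>s. SUP h\<in>{0<..\<delta>}. err s h) ` {\<delta>..T-\<delta>})"
    using err_le \<open>0 < \<delta>\<close> by (intro bdd_aboveI2[where M = B] cSUP_least) auto
  have "c \<le> H * (2*H-1) * 4 powr (2*H-2)"
    using two_powr_minus_one_mult_three_powr_le[of "2*H-1"] H
    unfolding c_def by (simp add: mult.assoc mult_left_mono)
  also have "\<dots> \<le> err \<delta> \<delta>"
    unfolding err_def using H(1,2) \<open>0 < \<delta>\<close> by (rule sfbm_relative_error_diagonal_ge)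
  also have "\<dots> \<le> (SUP h\<in>{0<..\<delta>}. err \<delta> h)"
    using bdd \<open>0 < \<delta>\<close> by (auto intro: cSUP_upper)
  also have "\<dots> \<le> (SUP s\<in>{\<delta>..T-\<delta>}. SUP h\<in>{0<..\<delta>}. err s h)"
    using bdd_sup assms by (auto intro: cSUP_upper)
  finally have "c \<le> (SUP s\<in>{\<delta>..T-\<delta>}. SUP h\<in>{0<..\<delta>}. err s h)" .
  moreover have "0 < c"
    using H unfolding c_def by simp
  ultimately show ?thesis
    unfolding c_def err_def by simp
qed

end
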